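(* Let $(A,\succ_A,\prec_A)$ be an anti-pre-Leibniz algebra with sub-adjacent Leibniz algebra $(A,\circ_A)$. If $(l_\succ,r_\succ,l_\prec,r_\prec,V)$ is a representation of $(A,\succ_A,\prec_A)$, then, with $l_\circ=l_\succ+l_\prec$ and $r_\circ=r_\succ+r_\prec$, $$\big(-l_\circ^*,\;-l_\prec^*-r_\succ^*,\;l_\prec^*,\;l_\circ^*+r_\circ^*,\;V^*\big)$$ is also a representation of $(A,\succ_A,\prec_A)$. In particular, $(-\mathcal L^*_{\circ_A},-\mathcal L^*_{\prec_A}-\mathcal R^*_{\succ_A},\mathcal L^*_{\prec_A},\mathcal L^*_{\circ_A}+\mathcal R^*_{\circ_A},A^* )$ is a representation of $(A,\succ_A,\prec_A)$.
   Context: All vector spaces are finite-dimensional over a field $\mathbb K$ of characteristic zero. For a multiplication $\ast$, $\mathcal L_\ast(x)y=x\ast y$, $\mathcal R_\ast(x)y=y\ast x$; for $f:A\to\mathrm{End}(V)$, $f^*:A\to\mathrm{End}(V^* )$ is $\langle f^*(x)u^*,v\rangle=-\langle u^*,f(x)v\rangle$. An anti-pre-Leibniz algebra is a vector space $A$ with multiplications $\succ_A,\prec_A$ such that, with $x\circ_A y=x\succ_A y+x\prec_A y$, for all $x,y,z$: (AL1) $(x\circ_A y)\prec_A z=x\succ_A(y\circ_A z)-y\succ_A(x\circ_A z)$; (AL2) $(x\circ_A y)\succ_A z=y\succ_A(x\succ_A z)-x\succ_A(y\succ_A z)$; (AL3) $x\prec_A(y\circ_A z)=(y\succ_A x)\prec_A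 z-y\succ_A(x\prec_A z)$; (AL4) $(x\succ_A y)\prec_A z=-(y\prec_A x)\prec_A z$. Its sub-adjacent Leibniz algebra is $(A,\circ_A)$. A representation of an anti-pre-Leibniz algebra $(A,\succ_A,\prec_A)$ is a tuple $(l_\succ,r_\succ,l_\prec,r_\prec,V)$ of linear maps $A\to\mathrm{End}(V)$ such that, writing $l_\circ=l_\succ+l_\prec$, $r_\circ=r_\succ+r_\prec$, for all $x,y\in A$ (as operators on $V$): (R1) $r_\prec(x)r_\circ(y)=r_\succ(y\circ_A x)-l_\succ(y)r_\circ(x)$; (R2) $r_\succ(x)r_\circ(y)=l_\succ(y)r_\succ(x)-r_\succ(y\succ_A x)$; (R3) $r_\prec(x\circ_A y)=r_\prec(y)l_\succ(x)-l_\succ(x)r_\prec(y)$; (R4) $r_\prec(x)r_\succ(y)=-r_\prec(x)l_\prec(y)$; (R5) $r_\succ(x)l_\circ(y)=r_\succ(y\succ_A x)-l_\succ(y)r_\succ(x)$; (R6) $l_\prec(x)r_\circ(y)=r_\prec(y)r_\succ(x)-r_\succ(x\prec_A y)$; (R7) $r_\prec(x)l_\succ(y)=-r_\prec(x)r_\prec(y)$; (R8) $l_\prec(x\circ_A y)=l_\succ(x)l_\circ(y)-l_\succ(y)l_\circ(x)$; (R9) $l_\succ(x\circ_A y)=l_\succ(y)l_\succ(x)-l_\succ(x)l_\succ(y)$; (R10) $l_\prec(x)l_\circ(y)=l_\prec(y\succ_A x)-l_\succ(y)l_\prec(x)$; (R11) $l_\prec(x\succ_A y)=-l_\prec(y\prec_A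 x)$. *)

theory Defs
  imports Complex_Main "HOL-Library.Function_Algebras"
begin

definition fd_vector_space :: "('k::field \<Rightarrow> 'v::ab_group_add \<Rightarrow> 'v) \<Rightarrow> bool" where
  "fd_vector_space s \<longleftrightarrow> (\<exists>B. Vector_Spaces.finite_dimensional_vector_space s B)"

definition bilinear_mult :: "('k::field \<Rightarrow> 'a::ab_group_add \<Rightarrow> 'a) \<Rightarrow> ('a \<Rightarrow> 'a \<Rightarrow> 'a) \<Rightarrow> bool" where
  "bilinear_mult s m \<longleftrightarrow> (\<forall>x. Vector_Spaces.linear s s (m x)) \<and> (\<forall>y. Vector_Spaces.linear s s (\<lambda>x. m x y))"

definition anti_pre_leibniz ::
  "('k::field \<Rightarrow> 'a::ab_group_add \<Rightarrow> 'a) \<Rightarrow> ('a \<Rightarrow> 'a \<Rightarrow> 'a) \<Rightarrow> ('a \<Rightarrow> 'a \<Rightarrow> 'a) \<Rightarrow> bool" where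
  "anti_pre_leibniz s sc pc \<longleftrightarrow>
     vector_space s \<and> bilinear_mult s sc \<and> bilinear_mult s pc \<and>
     (\<forall>x y z.
        pc (sc x y + pc x y) z = sc x (sc y z + pc y z) - sc y (sc x z + pc x z) \<and>
        sc (sc x y + pc x y) z = sc y (sc x z) - sc x (sc y z) \<and>
        pc x (sc y z + pc y z) = pc (sc y x) z - sc y (pc x z) \<and>
        pc (sc x y) z = - pc (pc y x) z)"

definition op_add :: "('a \<Rightarrow> 'w::ab_group_add \<Rightarrow> 'w) \<Rightarrow> ('a \<Rightarrow> 'w \<Rightarrow> 'w) \<Rightarrow> 'a \<Rightarrow> 'w \<Rightarrow> 'w" where
  "op_add f g = (\<lambda>x w. f x w + g x w)"

definition op_neg :: "('a \<Rightarrow> 'w::ab_group_add \<Rightarrow> 'w) \<Rightarrow> 'a \<Rightarrow> 'w \<Rightarrow> 'w" where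
  "op_neg f = (\<lambda>x w. - f x w)"

definition dual_space :: "('k::field \<Rightarrow> 'v::ab_group_add \<Rightarrow> 'v) \<Rightarrow> ('v \<Rightarrow> 'k) set" where
  "dual_space s = {u. Vector_Spaces.linear s (*) u}"

definition dual_scale :: "'k::field \<Rightarrow> ('v \<Rightarrow> 'k) \<Rightarrow> ('v \<Rightarrow> 'k)" where
  "dual_scale c u = (\<lambda>v. c * u v)"

definition dual_op :: "('a \<Rightarrow> 'v \<Rightarrow> 'v) \<Rightarrow> 'a \<Rightarrow> ('v \<Rightarrow> 'k::field) \<Rightarrow> ('v \<Rightarrow> 'k)" where
  "dual_op f = (\<lambda>x u. \<lambda>v. - u (f x v))"

definition lin_op_map ::
  "('k::field \<Rightarrow> 'a::ab_group_add \<Rightarrow> 'a) \<Rightarrow> ('k \<Rightarrow> 'w::ab_group_add \<Rightarrow> 'w) \<Rightarrow> 'w set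
   \<Rightarrow> ('a \<Rightarrow> 'w \<Rightarrow> 'w) \<Rightarrow> bool" where
  "lin_op_map sA sW W f \<longleftrightarrow>
     (\<forall>x. \<forall>w\<in>W. f x w \<in> W) \<and>
     (\<forall>x. \<forall>w\<in>W. \<forall>w'\<in>W. f x (w + w') = f x w + f x w') \<and>
     (\<forall>x c. \<forall>w\<in>W. f x (sW c w) = sW c (f x w)) \<and>
     (\<forall>x y. \<forall>w\<in>W. f (x + y) w = f x w + f y w) \<and>
     (\<forall>x c. \<forall>w\<in>W. f (sA c x) w = sW c (f x w))"

definition is_rep ::
  "('k::field \<Rightarrow> 'a::ab_group_add \<Rightarrow> 'a) \<Rightarrow> ('a \<Rightarrow> 'a \<Rightarrow> 'a) \<Rightarrow> ('a \<Rightarrow> 'a \<Rightarrow> 'a)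
   \<Rightarrow> ('k \<Rightarrow> 'w::ab_group_add \<Rightarrow> 'w) \<Rightarrow> 'w set
   \<Rightarrow> ('a \<Rightarrow> 'w \<Rightarrow> 'w) \<Rightarrow> ('a \<Rightarrow> 'w \<Rightarrow> 'w) \<Rightarrow> ('a \<Rightarrow> 'w \<Rightarrow> 'w) \<Rightarrow> ('a \<Rightarrow> 'w \<Rightarrow> 'w) \<Rightarrow> bool" where
  "is_rep sA sc pc sW W ls rs lp rp \<longleftrightarrow>
     vector_space sW \<and> module.subspace sW W \<and>
     lin_op_map sA sW W ls \<and> lin_op_map sA sW W rs \<and>
     lin_op_map sA sW W lp \<and> lin_op_map sA sW W rp \<and>
     (let lo = op_add ls lp; ro = op_add rs rp; co = (\<lambda>x y. sc x y + pc x y) in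
      \<forall>x y. \<forall>v\<in>W.
        rp x (ro y v) = rs (co y x) v - ls y (ro x v) \<and>
        rs x (ro y v) = ls y (rs x v) - rs (sc y x) v \<and>
        rp (co x y) v = rp y (ls x v) - ls x (rp y v) \<and>
        rp x (rs y v) = - rp x (lp y v) \<and>
        rs x (lo y v) = rs (sc y x) v - ls y (rs x v) \<and>
        lp x (ro y v) = rp y (rs x v) - rs (pc x y) v \<and>
        rp x (ls y v) = - rp x (rp y v) \<and>
        lp (co x y) v = ls x (lo y v) - ls y (lo x v) \<and>
        ls (co x y) v = ls y (ls x v) - ls x (ls y v) \<and>
        lp x (lo y v) = lp (sc y x) v - ls y (lp x v) \<and>
        lp (sc x y) v = - lp (pc y x) v)"

end

theory Submission
  imports Defs
begin

(*
  For f, g : A -> End(V) and u in V^* one has <f^*(x) g^*(y) u, v> = <u, g(y) f(x) v> and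
  <f^*(z) u, v> = - <u, f(z) v>. Hence each axiom (R1)-(R11) for the dual quadruple is the
  image under u of an identity in End(V) with all compositions reversed, its transpose.
  The transposes are linear consequences of (R1)-(R11); besides (R8), (R10), (R11)
  themselves, the main ones say that (l_o, r_o) is a representation of the sub-adjacent
  Leibniz algebra: l_o(x o y) = [l_o(x), l_o(y)], r_o(x o y) = l_o(x) r_o(y) - r_o(y) l_o(x)
  and r_o(x) (l_o(y) + r_o(y)) = 0.
  The second claim is the first one for the regular representation (L_>, R_>, L_<, R_<, A),
  which satisfies (R1)-(R11) by (AL1)-(AL4).
*)

lemma lin_op_map_UNIV_additive:
  assumes "lin_op_map sA s UNIV f"
  shows "f x (a + b) = f x a + f x b" "f x (- a) = - f x a" "f x (a - b) = f x a - f x b"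
    and "f (y + z) w = f y w + f z w"
proof -
  have "additive (f x)" using assms unfolding lin_op_map_def additive_def by auto
  then show "f x (a + b) = f x a + f x b" "f x (- a) = - f x a" "f x (a - b) = f x a - f x b"
    by (simp_all add: additive.add additive.minus additive.diff)
  show "f (y + z) w = f y w + f z w" using assms unfolding lin_op_map_def by auto
qed

lemma vector_space_dual_scale: "vector_space (dual_scale :: 'k::field \<Rightarrow> ('v \<Rightarrow> 'k) \<Rightarrow> _)"
  unfolding vector_space_def dual_scale_def by (auto simp: algebra_simps fun_eq_iff)

lemma dual_space_iff:
  "u \<in> dual_space sV \<longleftrightarrow>
     vector_space sV \<and> (\<forall>a b. u (a + b) = u a + u b) \<and> (\<forall>c a. u (sV c a) = c * u a)"
  unfolding dual_space_def Vector_Spaces.linear_iff vector_space_def by (auto simp: algebra_simps)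

lemma dual_space_additive:
  assumes "u \<in> dual_space sV"
  shows "u (a + b) = u a + u b" "u (- a) = - u a" "u (a - b) = u a - u b"
proof -
  have "additive u" using assms unfolding dual_space_iff additive_def by auto
  then show "u (a + b) = u a + u b" "u (- a) = - u a" "u (a - b) = u a - u b"
    by (simp_all add: additive.add additive.minus additive.diff)
qed

lemma subspace_dual_space:
  assumes "vector_space sV"
  shows "module.subspace dual_scale (dual_space sV)"
proof -
  have "module (dual_scale :: 'k::field \<Rightarrow> ('v \<Rightarrow> 'k) \<Rightarrow> _)"
    using vector_space_dual_scale by (simp add: module_iff_vector_space)
  then show ?thesis
    using assms
    by (auto simp: module.subspace_def[OF \<open>module dual_scale\<close>] dual_space_iff dual_scale_def
        algebra_simps)
qed

lemma lin_op_map_dual_op: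
  assumes "lin_op_map sA sV UNIV f"
  shows "lin_op_map sA dual_scale (dual_space sV) (dual_op f)"
  using assms unfolding lin_op_map_def
  by (auto simp: dual_space_iff dual_op_def dual_scale_def fun_eq_iff
      lin_op_map_UNIV_additive[OF assms] algebra_simps)

lemma lin_op_map_op_add:
  assumes "vector_space sW" "module.subspace sW W" "lin_op_map sA sW W f" "lin_op_map sA sW W g"
  shows "lin_op_map sA sW W (op_add f g)"
proof -
  have m: "module sW" using assms(1) by (simp add: module_iff_vector_space)
  then show ?thesis
    using assms(3,4) module.subspace_add[OF _ assms(2)] module.scale_right_distrib[OF m]
    unfolding lin_op_map_def op_add_def by (auto simp: algebra_simps)
qed

lemma lin_op_map_op_neg:
  assumes "vector_space sW" "module.subspace sW W" "lin_op_map sA sW W f"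
  shows "lin_op_map sA sW W (op_neg f)"
proof -
  have m: "module sW" using assms(1) by (simp add: module_iff_vector_space)
  then show ?thesis
    using assms(3) module.subspace_neg[OF _ assms(2)] module.scale_minus_right[OF m]
    unfolding lin_op_map_def op_neg_def by (auto simp: algebra_simps)
qed

locale anti_pre_leibniz_rep =
  fixes sA :: "'k::field \<Rightarrow> 'a::ab_group_add \<Rightarrow> 'a"
    and sc pc :: "'a \<Rightarrow> 'a \<Rightarrow> 'a"
    and sV :: "'k \<Rightarrow> 'v::ab_group_add \<Rightarrow> 'v"
    and ls rs lp rp :: "'a \<Rightarrow> 'v \<Rightarrow> 'v"
  assumes rep: "is_rep sA sc pc sV UNIV ls rs lp rp"
begin

abbreviation lo where "lo x v \<equiv> ls x v + lp x v"
abbreviation ro where "ro x v \<equiv> rs x v + rp x v"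
abbreviation co where "co x y \<equiv> sc x y + pc x y"

lemma lin_op_maps:
  "lin_op_map sA sV UNIV ls" "lin_op_map sA sV UNIV rs"
  "lin_op_map sA sV UNIV lp" "lin_op_map sA sV UNIV rp"
  using rep unfolding is_rep_def by auto

lemmas linearity =
  lin_op_map_UNIV_additive[OF lin_op_maps(1)] lin_op_map_UNIV_additive[OF lin_op_maps(2)]
  lin_op_map_UNIV_additive[OF lin_op_maps(3)] lin_op_map_UNIV_additive[OF lin_op_maps(4)]

lemma
  R1: "rp x (ro y v) = rs (co y x) v - ls y (ro x v)" and
  R2: "rs x (ro y v) = ls y (rs x v) - rs (sc y x) v" and
  R3: "rp (co x y) v = rp y (ls x v) - ls x (rp y v)" and
  R4: "rp x (rs y v) = - rp x (lp y v)" and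
  R5: "rs x (lo y v) = rs (sc y x) v - ls y (rs x v)" and
  R6: "lp x (ro y v) = rp y (rs x v) - rs (pc x y) v" and
  R7: "rp x (ls y v) = - rp x (rp y v)" and
  R8: "lp (co x y) v = ls x (lo y v) - ls y (lo x v)" and
  R9: "ls (co x y) v = ls y (ls x v) - ls x (ls y v)" and
  R10: "lp x (lo y v) = lp (sc y x) v - ls y (lp x v)" and
  R11: "lp (sc x y) v = - lp (pc y x) v"
  using rep unfolding is_rep_def Let_def op_add_def by simp_all

lemma rs_lo_eq: "rs x (lo y v) = - rs x (ro y v)"
  unfolding R5 R2 by (simp add: algebra_simps)

lemma rp_lo_eq: "rp x (lo y v) = - rp x (ro y v)"
  by (simp add: linearity R4 R7)

lemma lp_lo_swap: "lp x (lo y v) = lp y (lo x v) + lp (co y x) v + ls x (lp y v) - ls y (lp x v)"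
  unfolding R10 by (simp add: linearity R11 algebra_simps)

lemma lo_co: "lo (co x y) v = lo x (lo y v) - lo y (lo x v)"
  unfolding R9 R8 lp_lo_swap[of x y] by (simp add: linearity algebra_simps)

lemma ro_co: "ro (co x y) v = lo x (ro y v) - ro y (lo x v)"
proof -
  have "lo x (ro y v) - ro y (lo x v)
      = ls x (ro y v) + rp y (ro x v) + rp y (rs x v) + ls x (rs y v) - rs (co x y) v"
    unfolding R6 R5 rp_lo_eq by (simp add: linearity algebra_simps)
  also have "\<dots> = rp y (rs x v) + ls x (rs y v)"
    using R1[of y x v] by (simp add: algebra_simps)
  also have "\<dots> = ro (co x y) v"
    using R1[of y x v] unfolding R3 by (simp add: linearity R7 algebra_simps)
  finally show ?thesis ..
qed

lemma transpose_R1: "ls x (lo y v + ro y v) + rp x (lo y v + ro y v)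
    = lp (co x y) v + rs (co x y) v + ls y (lo x v) + rp y (lo x v)"
  unfolding R8[of x y] rp_lo_eq R1 by (simp add: linearity R4 R7 algebra_simps)

lemma transpose_R5:
  "ls x (lp y v + rs y v) = lp (sc x y) v + rs (sc x y) v - (lp y (lo x v) + rs y (lo x v))"
  unfolding R10 R5 by (simp add: linearity algebra_simps)

lemma transpose_R6: "ls x (lp y v) + rp x (lp y v)
    = - (lp y (lo x v) + lp y (ro x v) + rs y (lo x v) + rs y (ro x v))
      - (lp (pc y x) v + rs (pc y x) v)"
  unfolding R10 R6 rs_lo_eq by (simp add: linearity R4 R11 algebra_simps)

theorem dual_is_rep:
  "is_rep sA sc pc dual_scale (dual_space sV)
     (op_neg (dual_op (op_add ls lp)))
     (op_add (op_neg (dual_op lp)) (op_neg (dual_op rs)))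
     (dual_op lp)
     (op_add (dual_op (op_add ls lp)) (dual_op (op_add rs rp)))"
proof -
  have vs: "vector_space sV" and su: "module.subspace sV UNIV"
    using rep unfolding is_rep_def by auto
  note dual_vs = vector_space_dual_scale subspace_dual_space[OF vs]
  note expand =
    fun_eq_iff op_add_def op_neg_def dual_op_def dual_space_additive linearity algebra_simps
  show ?thesis
    unfolding is_rep_def Let_def
    apply (intro conjI allI ballI ext dual_vs lin_op_map_op_add lin_op_map_op_neg
        lin_op_map_dual_op lin_op_maps vs su)
    \<comment> \<open>the i-th goal is (Ri) for the dual quadruple, evaluated at u and v\<close>
    subgoal for x y u v
      using transpose_R1[of y x v, THEN arg_cong[of _ _ u]] by (simp add: expand)
    subgoal for x y u v
      using transpose_R5[of y x v, THEN arg_cong[of _ _ u]]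
        R4[of y x v, THEN arg_cong[of _ _ u]] by (simp add: expand)
    subgoal for x y u v
      using lo_co[of x y v, THEN arg_cong[of _ _ u]]
        ro_co[of x y v, THEN arg_cong[of _ _ u]] by (simp add: expand)
    subgoal for x y u v
      using rs_lo_eq[of y x v, THEN arg_cong[of _ _ u]] by (simp add: expand)
    subgoal for x y u v
      using transpose_R5[of y x v, THEN arg_cong[of _ _ u]] by (simp add: expand)
    subgoal for x y u v
      using transpose_R6[of y x v, THEN arg_cong[of _ _ u]] by (simp add: expand)
    subgoal for x y u v
      using rs_lo_eq[of y x v, THEN arg_cong[of _ _ u]]
        rp_lo_eq[of y x v, THEN arg_cong[of _ _ u]] by (simp add: expand)
    subgoal for x y u v
      using R8[of x y v, THEN arg_cong[of _ _ u]] by (simp add: expand)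
    subgoal for x y u v
      using lo_co[of x y v, THEN arg_cong[of _ _ u]] by (simp add: expand)
    subgoal for x y u v
      using R10[of x y v, THEN arg_cong[of _ _ u]] by (simp add: expand)
    subgoal for x y u v
      using R11[of x y v, THEN arg_cong[of _ _ u]] by (simp add: expand)
    done
qed

end

lemma lin_op_map_bilinear_mult:
  assumes "bilinear_mult s m"
  shows "lin_op_map s s UNIV m" "lin_op_map s s UNIV (\<lambda>x y. m y x)"
  using assms unfolding bilinear_mult_def lin_op_map_def Vector_Spaces.linear_iff by auto

lemma regular_rep:
  assumes "anti_pre_leibniz sA sc pc"
  shows "is_rep sA sc pc sA UNIV sc (\<lambda>x y. sc y x) pc (\<lambda>x y. pc y x)"
proof -
  have "bilinear_mult sA sc" "bilinear_mult sA pc"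
    using assms unfolding anti_pre_leibniz_def by auto
  then show ?thesis
    using assms lin_op_map_bilinear_mult[of sA sc] lin_op_map_bilinear_mult[of sA pc]
    unfolding anti_pre_leibniz_def is_rep_def Let_def op_add_def
    by (simp add: module.subspace_UNIV module_iff_vector_space[symmetric])
qed

theorem proposition2p20:
  fixes sA :: "'k::field_char_0 \<Rightarrow> 'a::ab_group_add \<Rightarrow> 'a"
    and sc pc :: "'a \<Rightarrow> 'a \<Rightarrow> 'a"
    and sV :: "'k \<Rightarrow> 'v::ab_group_add \<Rightarrow> 'v"
    and ls rs lp rp :: "'a \<Rightarrow> 'v \<Rightarrow> 'v"
  assumes "fd_vector_space sA"
    and "fd_vector_space sV"
    and "anti_pre_leibniz sA sc pc"
    and "is_rep sA sc pc sV UNIV ls rs lp rp"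
  shows "is_rep sA sc pc dual_scale (dual_space sV)
           (op_neg (dual_op (op_add ls lp)))
           (op_add (op_neg (dual_op lp)) (op_neg (dual_op rs)))
           (dual_op lp)
           (op_add (dual_op (op_add ls lp)) (dual_op (op_add rs rp)))
       \<and> is_rep sA sc pc dual_scale (dual_space sA)
           (op_neg (dual_op (\<lambda>x y. sc x y + pc x y)))
           (op_add (op_neg (dual_op pc)) (op_neg (dual_op (\<lambda>x y. sc y x))))
           (dual_op pc)
           (op_add (dual_op (\<lambda>x y. sc x y + pc x y)) (dual_op (\<lambda>x y. sc y x + pc y x)))"
proof -
  interpret V: anti_pre_leibniz_rep sA sc pc sV ls rs lp rp
    by unfold_locales (fact assms(4))
  interpret A: anti_pre_leibniz_rep sA sc pc sA sc "\<lambda>x y. sc y x" pc "\<lambda>x y. pc y x"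
    by unfold_locales (fact regular_rep[OF assms(3)])
  show ?thesis
    using V.dual_is_rep A.dual_is_rep by (simp add: op_add_def)
qed

end
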